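(* Let $D\ge2$ and let $\Lambda\subseteq\mathbb Z^D$ be the lattice with generator matrix $G=(v_{jr})_{1\le j,r\le D}$, where row $j$ is $(v_{j1},\dots,v_{jD})$. Assume $\Lambda$ induces a lattice tiling of the shape $\mathcal S$. Let $\ell_1\ge1$ and $\ell_2\ge0$ be integers with $\ell_1+\ell_2\le D$. Let $\delta=(d_1,\dots,d_D)$ with <ul> <li>$d_r=+1$ for $1\le r\le\ell_1$,</li> <li>$d_r=-1$ for $\ell_1<r\le\ell_1+\ell_2$,</li> <li>$d_r=0$ for $\ell_1+\ell_2<r\le D$.</li> </ul> For $2\le r\le D$ and $1\le j\le D$ define <ul> <li>$u_{rj}=v_{jr}-v_{j1}$ if $2\le r\le \ell_1$,</li> <li>$u_{rj}=v_{jr}+v_{j1}$ if $\ell_1+1\le r\le \ell_1+\ell_2$,</li> <li>$u_{rj}=v_{jr}$ if $\ell_1+\ell_2+1\le r\le D$.</li> </ul> Let $H$ be the $(D-1)\times D$ matrix $(u_{rj})_{2\le r\le D,\,1\le j\le D}$. For $1\le i\le D$, let $H_i$ be the $(D-1)\times(D-1)$ matrix obtained from $H$ by deleting its $i$-th column. Then $(\Lambda,\mathcal S,\delta)$ defines a folding if and only if $\gcd(\det H_1,\det H_2,\dots,\det H_D)=1$.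
   Context: Let $D\ge 1$. A shape is a finite nonempty set $\mathcal S\subset\mathbb Z^D$ containing the origin; the origin is its distinguished center point. A lattice is a set $\Lambda=\{\sum_{j=1}^D u_jv_j : u_1,\dots,u_D\in\mathbb Z\}$ for linearly independent $v_1,\dots,v_D\in\mathbb Z^D$. The $D\times D$ matrix $G$ whose rows are $v_1,\dots,v_D$ is a generator matrix of $\Lambda$. $\Lambda$ induces a lattice tiling of $\mathcal S$ if the translates $\mathcal S+\lambda$, $\lambda\in\Lambda$, are pairwise disjoint and cover $\mathbb Z^D$. The translate $\mathcal S+\lambda$ is called the copy of $\mathcal S$ with center $\lambda$. For $x\in\mathbb Z^D$, $c(x)$ denotes the unique $\lambda\in\Lambda$ with $x\in\mathcal S+\lambda$. A ternary vector (direction) is a nonzero $\delta\in\{-1,0,+1\}^D$. The folded-row of $(\Lambda,\mathcal S,\delta)$ is the sequence $p_0,p_1,p_2,\dots$ defined by $p_0=0$ and $p_{k+1}=(p_k+\delta)-c(p_k+\delta)$. Equivalently, $p_{k+1}=p_k+\delta$ if $p_k+\delta\in\mathcal S$; otherwise $p_{k+1}$ is $p_k+\delta$ minus the center of the copy of $\mathcal S$ containing $p_k+\delta$. The triple $(\Lambda,\mathcal S,\delta)$ defines a folding if every element of $\mathcal S$ occurs in its folded-row. *)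

theory Defs
  imports Main "Jordan_Normal_Form.Determinant"
begin

text \<open>Points of Z^D are functions nat => int vanishing outside the indices {0..<D}
  (coordinate r of the paper, 1 <= r <= D, is index r-1 here).
  A generator matrix G is given by its entries G j r (row j, column r), 0-based.\<close>

definition ZD :: "nat \<Rightarrow> (nat \<Rightarrow> int) set" where
  "ZD D = {x. \<forall>i\<ge>D. x i = 0}"

definition vadd :: "(nat \<Rightarrow> int) \<Rightarrow> (nat \<Rightarrow> int) \<Rightarrow> nat \<Rightarrow> int" where
  "vadd x y = (\<lambda>i. x i + y i)"

definition vsub :: "(nat \<Rightarrow> int) \<Rightarrow> (nat \<Rightarrow> int) \<Rightarrow> nat \<Rightarrow> int" where
  "vsub x y = (\<lambda>i. x i - y i)"

definition rows_lin_indep :: "nat \<Rightarrow> (nat \<Rightarrow> nat \<Rightarrow> int) \<Rightarrow> bool" where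
  "rows_lin_indep D G \<longleftrightarrow>
     (\<forall>a :: nat \<Rightarrow> real. (\<forall>r<D. (\<Sum>j<D. a j * real_of_int (G j r)) = 0) \<longrightarrow> (\<forall>j<D. a j = 0))"

definition lattice :: "nat \<Rightarrow> (nat \<Rightarrow> nat \<Rightarrow> int) \<Rightarrow> (nat \<Rightarrow> int) set" where
  "lattice D G = {x. \<exists>u :: nat \<Rightarrow> int. x = (\<lambda>r. if r < D then (\<Sum>j<D. u j * G j r) else 0)}"

definition is_shape :: "nat \<Rightarrow> (nat \<Rightarrow> int) set \<Rightarrow> bool" where
  "is_shape D S \<longleftrightarrow> finite S \<and> S \<noteq> {} \<and> S \<subseteq> ZD D \<and> (\<lambda>_. 0) \<in> S"

definition translate :: "(nat \<Rightarrow> int) set \<Rightarrow> (nat \<Rightarrow> int) \<Rightarrow> (nat \<Rightarrow> int) set" where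
  "translate S c = (\<lambda>s. vadd s c) ` S"

definition lattice_tiling :: "nat \<Rightarrow> (nat \<Rightarrow> int) set \<Rightarrow> (nat \<Rightarrow> int) set \<Rightarrow> bool" where
  "lattice_tiling D L S \<longleftrightarrow>
     (\<forall>a\<in>L. \<forall>b\<in>L. a \<noteq> b \<longrightarrow> translate S a \<inter> translate S b = {}) \<and>
     (\<Union>a\<in>L. translate S a) = ZD D"

definition center :: "(nat \<Rightarrow> int) set \<Rightarrow> (nat \<Rightarrow> int) set \<Rightarrow> (nat \<Rightarrow> int) \<Rightarrow> nat \<Rightarrow> int" where
  "center L S x = (THE c. c \<in> L \<and> x \<in> translate S c)"

primrec folded_row :: "(nat \<Rightarrow> int) set \<Rightarrow> (nat \<Rightarrow> int) set \<Rightarrow> (nat \<Rightarrow> int) \<Rightarrow> nat \<Rightarrow> nat \<Rightarrow> int" where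
  "folded_row L S \<delta> 0 = (\<lambda>_. 0)"
| "folded_row L S \<delta> (Suc k) =
     vsub (vadd (folded_row L S \<delta> k) \<delta>) (center L S (vadd (folded_row L S \<delta> k) \<delta>))"

definition defines_folding :: "(nat \<Rightarrow> int) set \<Rightarrow> (nat \<Rightarrow> int) set \<Rightarrow> (nat \<Rightarrow> int) \<Rightarrow> bool" where
  "defines_folding L S \<delta> \<longleftrightarrow> S \<subseteq> range (folded_row L S \<delta>)"

definition delta_dir :: "nat \<Rightarrow> nat \<Rightarrow> nat \<Rightarrow> int" where
  "delta_dir l1 l2 = (\<lambda>i. if i < l1 then 1 else if i < l1 + l2 then -1 else 0)"

text \<open>u_{rj} with 0-based r0 = r-1 (1 <= r0 <= D-1) and j0 = j-1.\<close>
definition uentry :: "nat \<Rightarrow> nat \<Rightarrow> (nat \<Rightarrow> nat \<Rightarrow> int) \<Rightarrow> nat \<Rightarrow> nat \<Rightarrow> int" where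
  "uentry l1 l2 G r0 j0 =
     (if r0 < l1 then G j0 r0 - G j0 0
      else if r0 < l1 + l2 then G j0 r0 + G j0 0
      else G j0 r0)"

definition Hmat :: "nat \<Rightarrow> nat \<Rightarrow> nat \<Rightarrow> (nat \<Rightarrow> nat \<Rightarrow> int) \<Rightarrow> int mat" where
  "Hmat D l1 l2 G = mat (D - 1) D (\<lambda>(a, b). uentry l1 l2 G (a + 1) b)"

text \<open>H_i (i 0-based column index): H with column i deleted.\<close>
definition Hdel :: "nat \<Rightarrow> nat \<Rightarrow> nat \<Rightarrow> (nat \<Rightarrow> nat \<Rightarrow> int) \<Rightarrow> nat \<Rightarrow> int mat" where
  "Hdel D l1 l2 G i =
     mat (D - 1) (D - 1) (\<lambda>(a, b). Hmat D l1 l2 G $$ (a, if b < i then b else b + 1))"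

end

theory Submission
  imports Defs
begin

(* Write L for the lattice and \<delta> for the direction.
   (1) Folding.  Every point p_k of the folded row lies in S and differs from k\<delta> by a
   lattice vector.  Since S is finite the row repeats, so some positive multiple N\<delta> lies
   in L.  Hence (L, S, \<delta>) defines a folding iff L + \<int>\<delta> = \<int>^D: a point x = \<lambda> + m\<delta> of S
   equals p_(m mod N), because x - p_(m mod N) is a lattice vector and copies are disjoint.
   (2) Reduction to H.  Eliminating the multiple of \<delta> via the first coordinate
   (\<delta>_1 = 1) shows that L + \<int>\<delta> = \<int>^D iff the integer (D-1) \<times> D matrix H maps \<int>^D
   onto \<int>^(D-1): row r of H applied to u is (uG)_r - \<delta>_r (uG)_1.
   (3) Linear algebra.  An integer n \<times> (n+1) matrix H maps \<int>^(n+1) onto \<int>^n iff the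
   gcd of its maximal minors det H_i is 1.  If the gcd is 1, a Bezout combination of the
   Cramer-type solutions H_i adj(H_i) y = det(H_i) y solves H v = y.  Conversely, from a
   right inverse X (H X = 1) each 1 - (X H)_jj is a multiple of the determinant of H
   extended by one row, which by Laplace expansion along that row is a combination of
   the det H_i; these numbers sum to (n+1) - trace(H X) = 1.
   The file develops (3) first, then the lattice facts for (1) and (2), and finally
   combines them in mainTheorem5. *)

section \<open>Integer matrices with one more column than rows\<close>

definition del_col :: "'a mat \<Rightarrow> nat \<Rightarrow> 'a mat" where
  "del_col H i = mat (dim_row H) (dim_col H - 1) (\<lambda>(a, b). H $$ (a, if b < i then b else Suc b))"

definition minors_Gcd :: "int mat \<Rightarrow> int" where
  "minors_Gcd H = Gcd ((\<lambda>i. det (del_col H i)) ` {..<dim_col H})"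

definition mat_onto :: "'a :: semiring_0 mat \<Rightarrow> bool" where
  "mat_onto H \<longleftrightarrow> (\<forall>y \<in> carrier_vec (dim_row H). \<exists>v \<in> carrier_vec (dim_col H). H *\<^sub>v v = y)"

lemma del_col_carrier [simp]: "H \<in> carrier_mat n (Suc n) \<Longrightarrow> del_col H i \<in> carrier_mat n n"
  unfolding del_col_def by simp

text \<open>Deleting column i is multiplication by the matrix that embeds \<open>n\<close> coordinates into
  \<open>n + 1\<close> coordinates, leaving coordinate i empty.\<close>

definition col_embedding :: "nat \<Rightarrow> nat \<Rightarrow> 'a :: zero_neq_one mat" where
  "col_embedding n i = mat (Suc n) n (\<lambda>(j, b). unit_vec (Suc n) (if b < i then b else Suc b) $ j)"

lemma del_col_eq_mult:
  fixes H :: "'a :: semiring_1 mat"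
  assumes H: "H \<in> carrier_mat n (Suc n)"
  shows "del_col H i = H * col_embedding n i"
proof (rule eq_matI)
  fix a b assume "a < dim_row (H * col_embedding n i)" "b < dim_col (H * col_embedding n i)"
  then have a: "a < n" and b: "b < n" using H by (auto simp: col_embedding_def)
  define s where "s = (if b < i then b else Suc b)"
  have s: "s < Suc n" using b by (simp add: s_def)
  have "(H * col_embedding n i) $$ (a, b) = row H a \<bullet> col (col_embedding n i) b"
    using a b H by (subst index_mult_mat) (auto simp: col_embedding_def)
  also have "col (col_embedding n i) b = unit_vec (Suc n) s"
    using b unfolding col_embedding_def s_def by (auto intro!: eq_vecI)
  also have "row H a \<bullet> unit_vec (Suc n) s = H $$ (a, s)"
    using a s H by simp
  finally show "del_col H i $$ (a, b) = (H * col_embedding n i) $$ (a, b)"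
    using a b H by (simp add: del_col_def s_def)
qed (use H in \<open>auto simp: del_col_def col_embedding_def\<close>)

lemma Gcd_image_int_combination:
  "\<exists>c. Gcd ((f :: nat \<Rightarrow> int) ` {..<k}) = (\<Sum>i<k. c i * f i)"
proof (induction k)
  case 0
  then show ?case by simp
next
  case (Suc k)
  then obtain c where c: "Gcd (f ` {..<k}) = (\<Sum>i<k. c i * f i)" by blast
  obtain s t where st: "s * f k + t * Gcd (f ` {..<k}) = gcd (f k) (Gcd (f ` {..<k}))"
    using bezout_int by blast
  have "Gcd (f ` {..<Suc k}) = gcd (f k) (Gcd (f ` {..<k}))"
    by (simp add: lessThan_Suc)
  also have "\<dots> = s * f k + (\<Sum>i<k. (t * c i) * f i)"
    using st c by (simp add: sum_distrib_left mult.assoc)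
  also have "\<dots> = (\<Sum>i<Suc k. (if i = k then s else t * c i) * f i)"
    by simp
  finally show ?case by (rule exI[of _ "\<lambda>i. if i = k then s else t * c i"])
qed

lemma mult_mat_vec_lin_comb:
  fixes A :: "'a :: comm_semiring_1 mat"
  assumes A: "A \<in> carrier_mat n m" and V: "\<And>i. i \<in> I \<Longrightarrow> V i \<in> carrier_vec m"
  shows "A *\<^sub>v vec m (\<lambda>k. \<Sum>i\<in>I. c i * V i $ k) = vec n (\<lambda>a. \<Sum>i\<in>I. c i * (A *\<^sub>v V i) $ a)"
proof (rule eq_vecI)
  fix a assume "a < dim_vec (vec n (\<lambda>a. \<Sum>i\<in>I. c i * (A *\<^sub>v V i) $ a))"
  then have a: "a < n" by simp
  have "(A *\<^sub>v vec m (\<lambda>k. \<Sum>i\<in>I. c i * V i $ k)) $ a = (\<Sum>k<m. A $$ (a, k) * (\<Sum>i\<in>I. c i * V i $ k))"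
    using A a by (simp add: scalar_prod_def lessThan_atLeast0)
  also have "\<dots> = (\<Sum>i\<in>I. c i * (\<Sum>k<m. A $$ (a, k) * V i $ k))"
    by (simp add: sum_distrib_left mult.left_commute sum.swap[of _ I])
  also have "\<dots> = (\<Sum>i\<in>I. c i * (A *\<^sub>v V i) $ a)"
  proof (intro sum.cong refl)
    fix i assume "i \<in> I"
    then have "dim_vec (V i) = m" using V carrier_vecD by blast
    then show "c i * (\<Sum>k<m. A $$ (a, k) * V i $ k) = c i * (A *\<^sub>v V i) $ a"
      using A a by (simp add: scalar_prod_def lessThan_atLeast0)
  qed
  finally show "(A *\<^sub>v vec m (\<lambda>k. \<Sum>i\<in>I. c i * V i $ k)) $ a = vec n (\<lambda>a. \<Sum>i\<in>I. c i * (A *\<^sub>v V i) $ a) $ a"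
    using a by simp
qed (use A in auto)

lemma cramer_column:
  fixes H :: "'a :: comm_ring_1 mat"
  assumes H: "H \<in> carrier_mat n (Suc n)" and y: "y \<in> carrier_vec n"
  shows "H *\<^sub>v (col_embedding n i *\<^sub>v (adj_mat (del_col H i) *\<^sub>v y)) = det (del_col H i) \<cdot>\<^sub>v y"
proof -
  have E: "col_embedding n i \<in> carrier_mat (Suc n) n" by (simp add: col_embedding_def)
  have Hi: "del_col H i \<in> carrier_mat n n" using H by simp
  have adj: "adj_mat (del_col H i) \<in> carrier_mat n n" using adj_mat(1)[OF Hi] .
  have "H *\<^sub>v (col_embedding n i *\<^sub>v (adj_mat (del_col H i) *\<^sub>v y))
      = (H * col_embedding n i * adj_mat (del_col H i)) *\<^sub>v y"
    using assoc_mult_mat_vec[OF E adj y] assoc_mult_mat_vec[OF H mult_carrier_mat[OF E adj] y]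
      assoc_mult_mat[OF H E adj] by simp
  also have "\<dots> = (del_col H i * adj_mat (del_col H i)) *\<^sub>v y"
    using del_col_eq_mult[OF H] by simp
  also have "\<dots> = det (del_col H i) \<cdot>\<^sub>v y"
    using adj_mat(2)[OF Hi] y by auto
  finally show ?thesis .
qed

text \<open>If the maximal minors are coprime, a Bezout combination of the Cramer solutions
  above solves \<open>H v = y\<close>.\<close>

lemma onto_if_minors_coprime:
  fixes H :: "int mat"
  assumes H: "H \<in> carrier_mat n (Suc n)" and g: "minors_Gcd H = 1"
  shows "mat_onto H"
  unfolding mat_onto_def
proof
  fix y :: "int vec" assume "y \<in> carrier_vec (dim_row H)"
  then have y: "y \<in> carrier_vec n" using H by simp
  obtain c where c: "1 = (\<Sum>i<Suc n. c i * det (del_col H i))"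
    using Gcd_image_int_combination[of "\<lambda>i. det (del_col H i)" "Suc n"] g H
    by (auto simp: minors_Gcd_def)
  define V where "V i = col_embedding n i *\<^sub>v (adj_mat (del_col H i) *\<^sub>v y)" for i
  have V: "V i \<in> carrier_vec (Suc n)" for i
    unfolding V_def col_embedding_def carrier_vec_def by simp
  define v where "v = vec (Suc n) (\<lambda>k. \<Sum>i<Suc n. c i * V i $ k)"
  have "H *\<^sub>v v = vec n (\<lambda>a. \<Sum>i<Suc n. c i * (H *\<^sub>v V i) $ a)"
    unfolding v_def by (rule mult_mat_vec_lin_comb[OF H V])
  also have "\<dots> = vec n (\<lambda>a. \<Sum>i<Suc n. c i * (det (del_col H i) \<cdot>\<^sub>v y) $ a)"
    unfolding V_def cramer_column[OF H y] ..
  also have "\<dots> = y"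
  proof (rule eq_vecI)
    fix a assume "a < dim_vec y"
    then have "(\<Sum>i<Suc n. c i * (det (del_col H i) \<cdot>\<^sub>v y) $ a)
        = (\<Sum>i<Suc n. c i * det (del_col H i)) * y $ a"
      by (simp add: sum_distrib_right mult.assoc del: sum.lessThan_Suc)
    also have "\<dots> = y $ a"
      by (simp only: c[symmetric] mult_1)
    finally show "vec n (\<lambda>a. \<Sum>i<Suc n. c i * (det (del_col H i) \<cdot>\<^sub>v y) $ a) $ a = y $ a"
      using \<open>a < dim_vec y\<close> y by simp
  qed (use y in simp)
  finally show "\<exists>v \<in> carrier_vec (dim_col H). H *\<^sub>v v = y"
    using H unfolding v_def by auto
qed

definition stack_row :: "'a mat \<Rightarrow> 'a vec \<Rightarrow> 'a mat" where
  "stack_row H w = mat (Suc (dim_row H)) (dim_col H)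
     (\<lambda>(a, b). if a < dim_row H then H $$ (a, b) else w $ b)"

text \<open>Laplace expansion along the appended row: the gcd of the maximal minors divides
  the determinant of every such extension.\<close>

lemma minors_Gcd_dvd_det_stack_row:
  fixes H :: "int mat"
  assumes H: "H \<in> carrier_mat n (Suc n)"
  shows "minors_Gcd H dvd det (stack_row H w)"
proof -
  have K: "stack_row H w \<in> carrier_mat (Suc n) (Suc n)"
    using H by (simp add: stack_row_def)
  have "minors_Gcd H dvd cofactor (stack_row H w) n b" if b: "b < Suc n" for b
  proof -
    have "mat_delete (stack_row H w) n b = del_col H b"
      using H by (intro eq_matI) (auto simp: mat_delete_def stack_row_def del_col_def)
    moreover have "minors_Gcd H dvd det (del_col H b)"
      using H b by (auto simp: minors_Gcd_def intro: Gcd_dvd)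
    ultimately show ?thesis by (simp add: cofactor_def)
  qed
  then have "minors_Gcd H dvd (\<Sum>b<Suc n. stack_row H w $$ (n, b) * cofactor (stack_row H w) n b)"
    by (intro dvd_sum dvd_mult) auto
  also have "\<dots> = det (stack_row H w)"
    using laplace_expansion_row[OF K, of n] by simp
  finally show ?thesis .
qed

text \<open>Given a right inverse X of H and a column index j, append to H the row
  \<open>w = e_j - (X H)_j\<close>, which is orthogonal to every column of X.  Multiplying by the
  matrix with columns \<open>X, e_j\<close> gives an upper triangular matrix with diagonal
  \<open>1, \<dots>, 1, w_j\<close>; hence \<open>w_j = 1 - (X H)_jj\<close> is a multiple of \<open>det (stack_row H w)\<close>.\<close>

lemma det_stack_row_with_right_inverse:
  fixes H X :: "'a :: comm_ring_1 mat"
  assumes H: "H \<in> carrier_mat n (Suc n)" and X: "X \<in> carrier_mat (Suc n) n"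
    and HX: "H * X = 1\<^sub>m n" and j: "j < Suc n"
  defines "w \<equiv> unit_vec (Suc n) j - row (X * H) j"
  shows "det (stack_row H w)
      * det (mat (Suc n) (Suc n) (\<lambda>(a, b). if b < n then X $$ (a, b) else unit_vec (Suc n) j $ a))
    = w $ j"
proof -
  define K where "K = stack_row H w"
  define Y where "Y = mat (Suc n) (Suc n) (\<lambda>(a, b). if b < n then X $$ (a, b) else unit_vec (Suc n) j $ a)"
  have K: "K \<in> carrier_mat (Suc n) (Suc n)" and Y: "Y \<in> carrier_mat (Suc n) (Suc n)"
    using H by (auto simp: K_def Y_def stack_row_def)
  have w: "w \<in> carrier_vec (Suc n)"
    unfolding w_def using row_carrier_vec[OF j mult_carrier_mat[OF X H]] by simp
  have row_K: "row K a = (if a < n then row H a else w)" if "a < Suc n" for a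
    using that H w by (auto simp: K_def stack_row_def intro!: eq_vecI)
  have col_Y: "col Y b = (if b < n then col X b else unit_vec (Suc n) j)" if "b < Suc n" for b
    using that X by (auto simp: Y_def intro!: eq_vecI)
  have w_col_X: "w \<bullet> col X b = 0" if b: "b < n" for b
  proof -
    have "w \<bullet> col X b = unit_vec (Suc n) j \<bullet> col X b - row (X * H) j \<bullet> col X b"
      unfolding w_def using H X j b by (intro minus_scalar_prod_distrib) auto
    also have "unit_vec (Suc n) j \<bullet> col X b = X $$ (j, b)"
      using X j b by simp
    also have "row (X * H) j \<bullet> col X b = (X * H * X) $$ (j, b)"
      using H X j b by (subst index_mult_mat) auto
    also have "X * H * X = X"
      using H X HX by (simp add: assoc_mult_mat[OF X H X])
    finally show ?thesis by simp
  qed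
  have KY_entry: "(K * Y) $$ (a, b) =
      (if a < n then (if b < n then 1\<^sub>m n $$ (a, b) else H $$ (a, j))
       else (if b < n then 0 else w $ j))" if a: "a < Suc n" and b: "b < Suc n" for a b
  proof -
    have "(K * Y) $$ (a, b) = row K a \<bullet> col Y b"
      using K Y a b by simp
    also have "\<dots> = (if a < n then (if b < n then (H * X) $$ (a, b) else H $$ (a, j))
        else (if b < n then 0 else w $ j))"
      using row_K[OF a] col_Y[OF b] a b H X j w_col_X by auto
    finally show ?thesis using HX by simp
  qed
  have "upper_triangular (K * Y)"
    unfolding upper_triangular_def
  proof (intro allI impI)
    fix a b assume "a < dim_row (K * Y)" and "b < a"
    then show "(K * Y) $$ (a, b) = 0"
      using K by (subst KY_entry) auto
  qed
  then have "det (K * Y) = (\<Prod>a = 0..<Suc n. (K * Y) $$ (a, a))"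
    using K Y by (simp add: det_upper_triangular[of _ "Suc n"] prod_list_diag_prod)
  also have "\<dots> = (\<Prod>a = 0..<Suc n. if a < n then 1 else w $ j)"
    by (intro prod.cong refl) (subst KY_entry, auto)
  also have "\<dots> = w $ j"
    by simp
  finally show ?thesis
    using det_mult[OF K Y] by (simp add: K_def Y_def)
qed

lemma trace_mult_comm:
  fixes A B :: "'a :: comm_semiring_0 mat"
  assumes "A \<in> carrier_mat m n" and "B \<in> carrier_mat n m"
  shows "(\<Sum>i<m. (A * B) $$ (i, i)) = (\<Sum>k<n. (B * A) $$ (k, k))"
proof -
  have "(\<Sum>i<m. (A * B) $$ (i, i)) = (\<Sum>i<m. \<Sum>k<n. A $$ (i, k) * B $$ (k, i))"
    using assms by (intro sum.cong) (auto simp: scalar_prod_def lessThan_atLeast0)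
  also have "\<dots> = (\<Sum>k<n. \<Sum>i<m. B $$ (k, i) * A $$ (i, k))"
    by (subst sum.swap) (simp add: mult.commute)
  also have "\<dots> = (\<Sum>k<n. (B * A) $$ (k, k))"
    using assms by (intro sum.cong) (auto simp: scalar_prod_def lessThan_atLeast0)
  finally show ?thesis .
qed

text \<open>A right inverse forces coprime minors: the gcd g divides every \<open>1 - (X H)_jj\<close>,
  hence also their sum \<open>(n + 1) - trace (X H) = (n + 1) - trace (H X) = 1\<close>.\<close>

lemma minors_coprime_if_right_inverse:
  fixes H X :: "int mat"
  assumes H: "H \<in> carrier_mat n (Suc n)" and X: "X \<in> carrier_mat (Suc n) n"
    and HX: "H * X = 1\<^sub>m n"
  shows "minors_Gcd H = 1"
proof -
  have "minors_Gcd H dvd 1 - (X * H) $$ (j, j)" if j: "j < Suc n" for j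
  proof -
    define w where "w = unit_vec (Suc n) j - row (X * H) j"
    obtain Y where Y: "det (stack_row H w) * det Y = w $ j"
      using det_stack_row_with_right_inverse[OF H X HX j] unfolding w_def by blast
    have "minors_Gcd H dvd det (stack_row H w) * det Y"
      using minors_Gcd_dvd_det_stack_row[OF H] by (rule dvd_mult2)
    then have "minors_Gcd H dvd w $ j"
      unfolding Y .
    then show ?thesis
      using H X j by (simp add: w_def)
  qed
  then have "minors_Gcd H dvd (\<Sum>j<Suc n. 1 - (X * H) $$ (j, j))"
    by (intro dvd_sum) auto
  also have "(\<Sum>j<Suc n. 1 - (X * H) $$ (j, j)) = int (Suc n) - (\<Sum>a<n. (H * X) $$ (a, a))"
    by (simp add: sum_subtractf trace_mult_comm[OF H X] del: sum.lessThan_Suc)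
  also have "(\<Sum>a<n. (H * X) $$ (a, a)) = int n"
    using HX by simp
  finally have "minors_Gcd H dvd 1" by simp
  then show ?thesis
    by (simp add: minors_Gcd_def)
qed

lemma right_inverse_if_onto:
  fixes H :: "'a :: comm_semiring_1 mat"
  assumes H: "H \<in> carrier_mat n m" and onto: "mat_onto H"
  shows "\<exists>X \<in> carrier_mat m n. H * X = 1\<^sub>m n"
proof -
  have "\<exists>x \<in> carrier_vec m. H *\<^sub>v x = unit_vec n b" if "b < n" for b
    using onto H that unfolding mat_onto_def by simp
  then have "\<forall>b. \<exists>x. b < n \<longrightarrow> x \<in> carrier_vec m \<and> H *\<^sub>v x = unit_vec n b"
    by blast
  then obtain xs where xs: "\<And>b. b < n \<Longrightarrow> xs b \<in> carrier_vec m \<and> H *\<^sub>v xs b = unit_vec n b"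
    by metis
  define X where "X = mat m n (\<lambda>(a, b). xs b $ a)"
  have "H * X = 1\<^sub>m n"
  proof (rule eq_matI)
    fix a b assume "a < dim_row (1\<^sub>m n :: 'a mat)" "b < dim_col (1\<^sub>m n :: 'a mat)"
    then have a: "a < n" and b: "b < n" by auto
    have "col X b = xs b"
      using xs[OF b] b by (auto simp: X_def intro!: eq_vecI)
    then have "(H * X) $$ (a, b) = (H *\<^sub>v xs b) $ a"
      using H a b by (simp add: X_def)
    then show "(H * X) $$ (a, b) = 1\<^sub>m n $$ (a, b)"
      using xs[OF b] a b by simp
  qed (use H in \<open>auto simp: X_def\<close>)
  then show ?thesis by (auto simp: X_def)
qed

theorem onto_iff_minors_coprime:
  fixes H :: "int mat"
  assumes H: "H \<in> carrier_mat n (Suc n)"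
  shows "mat_onto H \<longleftrightarrow> minors_Gcd H = 1"
  using onto_if_minors_coprime[OF H] right_inverse_if_onto[OF H]
    minors_coprime_if_right_inverse[OF H] by blast

section \<open>Lattices and tilings\<close>

definition lattice_point :: "nat \<Rightarrow> (nat \<Rightarrow> nat \<Rightarrow> int) \<Rightarrow> (nat \<Rightarrow> int) \<Rightarrow> nat \<Rightarrow> int" where
  "lattice_point D G u = (\<lambda>r. if r < D then (\<Sum>j<D. u j * G j r) else 0)"

definition vscale :: "int \<Rightarrow> (nat \<Rightarrow> int) \<Rightarrow> nat \<Rightarrow> int" where
  "vscale c x = (\<lambda>i. c * x i)"

lemma lattice_iff: "x \<in> lattice D G \<longleftrightarrow> (\<exists>u. x = lattice_point D G u)"
  unfolding lattice_def lattice_point_def by auto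

lemma lattice_zero: "(\<lambda>_. 0) \<in> lattice D G"
  unfolding lattice_iff by (rule exI[of _ "\<lambda>_. 0"]) (simp add: lattice_point_def fun_eq_iff)

lemma lattice_add:
  assumes "a \<in> lattice D G" and "b \<in> lattice D G"
  shows "vadd a b \<in> lattice D G"
proof -
  obtain u v where "a = lattice_point D G u" "b = lattice_point D G v"
    using assms by (auto simp: lattice_iff)
  then have "vadd a b = lattice_point D G (\<lambda>j. u j + v j)"
    by (simp add: lattice_point_def vadd_def fun_eq_iff algebra_simps sum.distrib)
  then show ?thesis by (auto simp: lattice_iff)
qed

lemma lattice_scale:
  assumes "a \<in> lattice D G"
  shows "vscale c a \<in> lattice D G"
proof -
  obtain u where "a = lattice_point D G u"
    using assms by (auto simp: lattice_iff)
  then have "vscale c a = lattice_point D G (\<lambda>j. c * u j)"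
    by (simp add: lattice_point_def vscale_def fun_eq_iff algebra_simps sum_distrib_left)
  then show ?thesis by (auto simp: lattice_iff)
qed

lemma lattice_sub:
  assumes "a \<in> lattice D G" and "b \<in> lattice D G"
  shows "vsub a b \<in> lattice D G"
proof -
  from assms have "vadd a (vscale (-1) b) \<in> lattice D G"
    by (intro lattice_add lattice_scale)
  then show ?thesis
    by (simp add: vadd_def vsub_def vscale_def)
qed

lemma translate_iff: "x \<in> translate S c \<longleftrightarrow> vsub x c \<in> S"
proof
  assume "x \<in> translate S c"
  then obtain s where "s \<in> S" "x = vadd s c"
    by (auto simp: translate_def)
  moreover have "vsub (vadd s c) c = s"
    by (simp add: vadd_def vsub_def)
  ultimately show "vsub x c \<in> S" by simp
next
  assume "vsub x c \<in> S"
  moreover have "x = vadd (vsub x c) c"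
    by (simp add: vadd_def vsub_def)
  ultimately show "x \<in> translate S c"
    unfolding translate_def by blast
qed

lemma tiling_copy_unique:
  assumes "lattice_tiling D L S" and "a \<in> L" and "b \<in> L"
    and "x \<in> translate S a" and "x \<in> translate S b"
  shows "a = b"
  using assms unfolding lattice_tiling_def by blast

lemma center_spec:
  assumes T: "lattice_tiling D L S" and x: "x \<in> ZD D"
  shows "center L S x \<in> L \<and> x \<in> translate S (center L S x)"
proof -
  from x T obtain c where c: "c \<in> L" "x \<in> translate S c"
    unfolding lattice_tiling_def by blast
  have "center L S x = c"
    unfolding center_def using c tiling_copy_unique[OF T] by blast
  then show ?thesis using c by simp
qed

section \<open>Foldings and the lattice \<open>L + \<int>\<delta>\<close>\<close>

lemma folded_row_invariant:
  assumes T: "lattice_tiling D (lattice D G) S" and Sh: "is_shape D S" and \<delta>: "\<delta> \<in> ZD D"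
  shows "folded_row (lattice D G) S \<delta> k \<in> S
    \<and> vsub (vscale (int k) \<delta>) (folded_row (lattice D G) S \<delta> k) \<in> lattice D G"
proof (induction k)
  case 0
  then show ?case
    using Sh lattice_zero by (simp add: is_shape_def vsub_def vscale_def)
next
  case (Suc k)
  let ?L = "lattice D G"
  let ?p = "folded_row ?L S \<delta> k"
  let ?c = "center ?L S (vadd ?p \<delta>)"
  have "vadd ?p \<delta> \<in> ZD D"
    using Suc Sh \<delta> by (auto simp: is_shape_def ZD_def vadd_def)
  then have c: "?c \<in> ?L" "vadd ?p \<delta> \<in> translate S ?c"
    using center_spec[OF T] by auto
  have "vsub (vscale (int (Suc k)) \<delta>) (folded_row ?L S \<delta> (Suc k))
      = vadd (vsub (vscale (int k) \<delta>) ?p) ?c"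
    by (simp add: vadd_def vsub_def vscale_def fun_eq_iff algebra_simps)
  then show ?case
    using c Suc lattice_add by (simp add: translate_iff)
qed

text \<open>The folded row takes values in the finite set S, so it repeats; the difference
  of two equal terms shows that some positive multiple of \<delta> is a lattice vector.\<close>

lemma direction_multiple_in_lattice:
  assumes T: "lattice_tiling D (lattice D G) S" and Sh: "is_shape D S" and \<delta>: "\<delta> \<in> ZD D"
  shows "\<exists>N > 0. vscale N \<delta> \<in> lattice D G"
proof -
  let ?p = "folded_row (lattice D G) S \<delta>"
  have "range ?p \<subseteq> S"
    using folded_row_invariant[OF T Sh \<delta>] by auto
  then have "finite (range ?p)"
    using Sh finite_subset unfolding is_shape_def by auto
  then have "\<not> inj ?p"
    using finite_imageD by blast
  then obtain a b where ab: "a < b" "?p a = ?p b"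
    unfolding inj_def by (metis linorder_neqE_nat)
  have "vsub (vsub (vscale (int b) \<delta>) (?p b)) (vsub (vscale (int a) \<delta>) (?p a)) \<in> lattice D G"
    using lattice_sub folded_row_invariant[OF T Sh \<delta>] by blast
  moreover have "vsub (vsub (vscale (int b) \<delta>) (?p b)) (vsub (vscale (int a) \<delta>) (?p a))
      = vscale (int b - int a) \<delta>"
    using ab(2) by (simp add: vsub_def vscale_def fun_eq_iff algebra_simps)
  ultimately show ?thesis
    using ab(1) by (intro exI[of _ "int b - int a"]) auto
qed

definition line_covers :: "nat \<Rightarrow> (nat \<Rightarrow> int) set \<Rightarrow> (nat \<Rightarrow> int) \<Rightarrow> bool" where
  "line_covers D L \<delta> \<longleftrightarrow> (\<forall>x \<in> ZD D. \<exists>lam \<in> L. \<exists>m. x = vadd lam (vscale m \<delta>))"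

text \<open>If the folded row runs through S, then each \<open>x = c + s\<close> with \<open>c \<in> L\<close>,
  \<open>s = p_k \<in> S\<close> equals \<open>(c - (k\<delta> - p_k)) + k\<delta> \<in> L + \<int>\<delta>\<close>.\<close>

lemma line_covers_if_folding:
  assumes T: "lattice_tiling D (lattice D G) S" and Sh: "is_shape D S" and \<delta>: "\<delta> \<in> ZD D"
    and F: "defines_folding (lattice D G) S \<delta>"
  shows "line_covers D (lattice D G) \<delta>"
  unfolding line_covers_def
proof
  fix x assume "x \<in> ZD D"
  then obtain a where a: "a \<in> lattice D G" "x \<in> translate S a"
    using T unfolding lattice_tiling_def by blast
  then obtain k where k: "vsub x a = folded_row (lattice D G) S \<delta> k"
    using F unfolding defines_folding_def translate_iff by blast
  let ?lam = "vsub a (vsub (vscale (int k) \<delta>) (folded_row (lattice D G) S \<delta> k))"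
  have "?lam \<in> lattice D G"
    using lattice_sub a(1) folded_row_invariant[OF T Sh \<delta>] by blast
  moreover have "x = vadd ?lam (vscale (int k) \<delta>)"
  proof
    fix i
    have "x i - a i = folded_row (lattice D G) S \<delta> k i"
      using fun_cong[OF k, of i] by (simp add: vsub_def)
    then show "x i = vadd ?lam (vscale (int k) \<delta>) i"
      by (simp add: vadd_def vsub_def vscale_def)
  qed
  ultimately show "\<exists>lam \<in> lattice D G. \<exists>m. x = vadd lam (vscale m \<delta>)"
    by blast
qed

text \<open>Conversely, write \<open>s \<in> S\<close> as \<open>c + m\<delta>\<close> and let k = m mod N with \<open>N\<delta> \<in> L\<close>;
  then \<open>s - p_k\<close> is a lattice vector, and since s and \<open>p_k\<close> both lie in S,
  disjointness of the copies forces \<open>s = p_k\<close>.\<close>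

lemma folding_if_line_covers:
  assumes T: "lattice_tiling D (lattice D G) S" and Sh: "is_shape D S" and \<delta>: "\<delta> \<in> ZD D"
    and C: "line_covers D (lattice D G) \<delta>"
  shows "defines_folding (lattice D G) S \<delta>"
  unfolding defines_folding_def
proof
  let ?L = "lattice D G"
  let ?p = "folded_row ?L S \<delta>"
  fix s assume s: "s \<in> S"
  obtain N where N: "N > 0" "vscale N \<delta> \<in> ?L"
    using direction_multiple_in_lattice[OF T Sh \<delta>] by blast
  obtain lam m where lam: "lam \<in> ?L" "s = vadd lam (vscale m \<delta>)"
    using C s Sh unfolding line_covers_def is_shape_def by blast
  define k where "k = nat (m mod N)"
  define q where "q = m div N"
  have m: "m = int k + q * N"
    using N(1) by (simp add: k_def q_def)
  have "vsub s (?p k) = vadd (vadd lam (vscale q (vscale N \<delta>))) (vsub (vscale (int k) \<delta>) (?p k))"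
    using lam(2) by (simp add: m vadd_def vsub_def vscale_def fun_eq_iff algebra_simps)
  then have "vsub s (?p k) \<in> ?L"
    using lam(1) N(2) folded_row_invariant[OF T Sh \<delta>] by (simp add: lattice_add lattice_scale)
  moreover have "s \<in> translate S (vsub s (?p k))"
    using folded_row_invariant[OF T Sh \<delta>, of k] by (simp add: translate_iff vsub_def)
  moreover have "s \<in> translate S (\<lambda>_. 0)"
    using s by (simp add: translate_iff vsub_def)
  ultimately have "vsub s (?p k) = (\<lambda>_. 0)"
    using tiling_copy_unique[OF T] lattice_zero by blast
  then have "s = ?p k"
    by (simp add: vsub_def fun_eq_iff)
  then show "s \<in> range ?p" by blast
qed

section \<open>The matrix H\<close>

lemma uentry_eq: "uentry l1 l2 G r j = G j r - delta_dir l1 l2 r * G j 0"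
  unfolding uentry_def delta_dir_def by auto

lemma Hmat_carrier: "D = Suc n \<Longrightarrow> Hmat D l1 l2 G \<in> carrier_mat n (Suc n)"
  unfolding Hmat_def by simp

lemma Hdel_eq_del_col: "Hdel D l1 l2 G i = del_col (Hmat D l1 l2 G) i"
  unfolding Hdel_def del_col_def by (intro eq_matI) (auto simp: Hmat_def)

lemma Hmat_mult_vec:
  assumes a: "a < D - 1"
  shows "(Hmat D l1 l2 G *\<^sub>v vec D u) $ a
    = lattice_point D G u (Suc a) - delta_dir l1 l2 (Suc a) * lattice_point D G u 0"
proof -
  have "(Hmat D l1 l2 G *\<^sub>v vec D u) $ a = (\<Sum>j<D. uentry l1 l2 G (Suc a) j * u j)"
    using a by (simp add: Hmat_def scalar_prod_def lessThan_atLeast0)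
  also have "\<dots> = (\<Sum>j<D. u j * G j (Suc a)) - delta_dir l1 l2 (Suc a) * (\<Sum>j<D. u j * G j 0)"
    by (simp add: uentry_eq algebra_simps sum_subtractf sum_distrib_left)
  finally show ?thesis
    using a by (simp add: lattice_point_def)
qed

text \<open>If \<open>L + \<int>\<delta> = \<int>^D\<close>, the point \<open>(0, y)\<close> is \<open>uG + m\<delta>\<close>; its first coordinate gives
  \<open>(uG)_1 = -m\<close>, so \<open>H u = y\<close>.\<close>

lemma onto_if_line_covers:
  assumes D: "D = Suc n" and l1: "l1 \<ge> 1"
    and C: "line_covers D (lattice D G) (delta_dir l1 l2)"
  shows "mat_onto (Hmat D l1 l2 G)"
  unfolding mat_onto_def
proof
  let ?\<delta> = "delta_dir l1 l2"
  fix y :: "int vec" assume "y \<in> carrier_vec (dim_row (Hmat D l1 l2 G))"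
  then have y: "y \<in> carrier_vec n" using D by (simp add: Hmat_def)
  define x where "x i = (if 1 \<le> i \<and> i < D then y $ (i - 1) else 0)" for i
  have "x \<in> ZD D" unfolding x_def ZD_def by auto
  then obtain lam m where "lam \<in> lattice D G" and x_lam: "x = vadd lam (vscale m ?\<delta>)"
    using C unfolding line_covers_def by blast
  then obtain u where x: "x = vadd (lattice_point D G u) (vscale m ?\<delta>)"
    unfolding lattice_iff by blast
  have u0: "lattice_point D G u 0 = - m"
    using fun_cong[OF x, of 0] l1 D by (simp add: x_def vadd_def vscale_def delta_dir_def)
  have "Hmat D l1 l2 G *\<^sub>v vec D u = y"
  proof (rule eq_vecI)
    fix a assume "a < dim_vec y"
    then have a: "a < D - 1" and "Suc a < D" using y D by simp_all
    then have "y $ a = lattice_point D G u (Suc a) + m * ?\<delta> (Suc a)"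
      using fun_cong[OF x, of "Suc a"] by (simp add: x_def vadd_def vscale_def)
    then show "(Hmat D l1 l2 G *\<^sub>v vec D u) $ a = y $ a"
      unfolding Hmat_mult_vec[OF a] u0 by (simp add: algebra_simps)
  qed (use y D in \<open>simp add: Hmat_def\<close>)
  then show "\<exists>v \<in> carrier_vec (dim_col (Hmat D l1 l2 G)). Hmat D l1 l2 G *\<^sub>v v = y"
    by (intro bexI[of _ "vec D u"]) (auto simp: Hmat_def)
qed

text \<open>If H is onto, solve \<open>H u = (x_r - \<delta>_r x_1)_r\<close>; then \<open>x = uG + m\<delta>\<close> with
  \<open>m = x_1 - (uG)_1\<close>.\<close>

lemma line_covers_if_onto:
  assumes D: "D = Suc n" and l1: "l1 \<ge> 1" and l12: "l1 + l2 \<le> D"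
    and onto: "mat_onto (Hmat D l1 l2 G)"
  shows "line_covers D (lattice D G) (delta_dir l1 l2)"
  unfolding line_covers_def
proof
  let ?\<delta> = "delta_dir l1 l2"
  fix x assume x: "x \<in> ZD D"
  define y where "y = vec n (\<lambda>a. x (Suc a) - ?\<delta> (Suc a) * x 0)"
  have "y \<in> carrier_vec (dim_row (Hmat D l1 l2 G))"
    using D by (simp add: y_def Hmat_def)
  then obtain v where v: "v \<in> carrier_vec D" "Hmat D l1 l2 G *\<^sub>v v = y"
    using onto unfolding mat_onto_def by (auto simp: Hmat_def)
  define u where "u j = v $ j" for j
  have v_eq: "v = vec D u"
    using v(1) by (auto simp: u_def intro!: eq_vecI)
  define m where "m = x 0 - lattice_point D G u 0"
  have "x i = lattice_point D G u i + m * ?\<delta> i" for i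
  proof (cases "i = 0")
    case True
    then show ?thesis using l1 by (simp add: m_def delta_dir_def)
  next
    case i: False
    show ?thesis
    proof (cases "i < D")
      case True
      then have a: "i - 1 < D - 1" and a': "i - 1 < n" and i_eq: "Suc (i - 1) = i" and "0 < i"
        using i D by simp_all
      have "lattice_point D G u i - ?\<delta> i * lattice_point D G u 0
          = (Hmat D l1 l2 G *\<^sub>v vec D u) $ (i - 1)"
        using Hmat_mult_vec[OF a] by (simp only: i_eq)
      also have "\<dots> = y $ (i - 1)"
        using v(2) v_eq by simp
      also have "\<dots> = x i - ?\<delta> i * x 0"
        using a' \<open>0 < i\<close> by (simp add: y_def)
      finally have "lattice_point D G u i - ?\<delta> i * lattice_point D G u 0 = x i - ?\<delta> i * x 0" .
      then show ?thesis by (simp add: m_def algebra_simps)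
    next
      case False
      then show ?thesis
        using x l12 by (simp add: ZD_def lattice_point_def delta_dir_def)
    qed
  qed
  then have "x = vadd (lattice_point D G u) (vscale m ?\<delta>)"
    by (simp add: vadd_def vscale_def fun_eq_iff)
  then show "\<exists>lam \<in> lattice D G. \<exists>m. x = vadd lam (vscale m ?\<delta>)"
    by (intro bexI[of _ "lattice_point D G u"] exI[of _ m]) (auto simp: lattice_iff)
qed

theorem mainTheorem5:
  fixes D l1 l2 :: nat and G :: "nat \<Rightarrow> nat \<Rightarrow> int" and S :: "(nat \<Rightarrow> int) set"
  assumes "D \<ge> 2"
    and "rows_lin_indep D G"
    and "is_shape D S"
    and "lattice_tiling D (lattice D G) S"
    and "l1 \<ge> 1" and "l1 + l2 \<le> D"
  shows "defines_folding (lattice D G) S (delta_dir l1 l2) \<longleftrightarrow>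
         Gcd ((\<lambda>i. det (Hdel D l1 l2 G i)) ` {..<D}) = 1"
proof -
  obtain n where D: "D = Suc n" using assms(1) by (cases D) auto
  have H: "Hmat D l1 l2 G \<in> carrier_mat n (Suc n)"
    using Hmat_carrier[OF D] .
  have \<delta>: "delta_dir l1 l2 \<in> ZD D"
    using assms(6) by (simp add: delta_dir_def ZD_def)
  have "defines_folding (lattice D G) S (delta_dir l1 l2) \<longleftrightarrow> line_covers D (lattice D G) (delta_dir l1 l2)"
    using line_covers_if_folding folding_if_line_covers assms(3,4) \<delta> by blast
  also have "\<dots> \<longleftrightarrow> mat_onto (Hmat D l1 l2 G)"
    using onto_if_line_covers line_covers_if_onto D assms(5,6) by blast
  also have "\<dots> \<longleftrightarrow> minors_Gcd (Hmat D l1 l2 G) = 1"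
    using onto_iff_minors_coprime[OF H] .
  also have "minors_Gcd (Hmat D l1 l2 G) = Gcd ((\<lambda>i. det (Hdel D l1 l2 G i)) ` {..<D})"
    using H D by (simp add: minors_Gcd_def Hdel_eq_del_col)
  finally show ?thesis .
qed

end
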